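(* Let $u$ and $v$ be monomials and let $h_1,\dots,h_m\in\{x_1,\dots,x_n\}$. (i) If $\tilde p_{x_i,x_j}=1$ for all $x_i\in\mu(u)$ and all $x_j\in\mu(v)$, then $[u,v]=0$ in $\mathfrak{B}(V)$. (ii) If the monomial $h_1h_2\cdots h_m$ is disconnected, then $\sigma(h_1,\dots,h_m)=0$ for every full bracketing $\sigma$ of $h_1,\dots,h_m$ (in this order) by the bracket $[\,,\,]$. (iii) If $h_1h_2\cdots h_m\neq 0$ in $\mathfrak{B}(V)$ and $h_1h_2\cdots h_m$ is disconnected, then $h_1h_2\cdots h_m\notin\mathfrak{L}(V)$.
   Context: $F$ is an algebraically closed field of characteristic $0$. $V$ is a braided vector space of diagonal type with basis $x_1,\dots,x_n$ and braiding $C(x_i\otimes x_j)=q_{ij}x_j\otimes x_i$, $q_{ij}\in F^*$; $\mathfrak{B}(V)$ is its Nichols algebra, $\mathbb{Z}^n$-graded with $\deg x_i=e_i$. Let $\chi$ be the bicharacter of $\mathbb{Z}^n$ with $\chi(e_i,e_j)=q_{ij}$; put $p_{ij}:=q_{ij}$, $p_{uv}:=\chi(\deg u,\deg v)$ for homogeneous $u,v$, and $\tilde p_{x_i,x_j}:=p_{ij}p_{ji}$ (also for $i=j$). For homogeneous $x,y\in\mathfrak{B}(V)$ put $[x,y]:=yx-p_{yx}xy$; the Nichols braided Lie algebra $\mathfrak{L}(V)$ is the linear span in $\mathfrak{B}(V)$ of all iterated brackets (with any bracketing) of elements of $\{x_1,\dots,x_n\}$. A monomial is a word $u=h_1\cdots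 h_m$ ($m\ge1$, $h_j\in\{x_1,\dots,x_n\}$), also regarded as an element of $\mathfrak{B}(V)$; $\mu(u)$ is the set of letters occurring in the word. The pure generalized Dynkin graph $\Gamma(V)$ has vertex set $\{1,\dots,n\}$ and an edge $\{i,j\}$ ($i\neq j$) iff $p_{ij}p_{ji}\neq1$. A monomial $u$ is connected if the subgraph of $\Gamma(V)$ induced on $\{i: x_i\in\mu(u)\}$ is connected (a single vertex counts as connected), and disconnected otherwise. *)

theory Defs
  imports "HOL-Computational_Algebra.Polynomial" "HOL-Library.Function_Algebras" "HOL-Combinatorics.Permutations"
begin

(* Letters x_1..x_n are encoded as naturals 0..n-1; a word (monomial) is a nat list.
   Elements of the tensor algebra T(V) are coefficient functions  nat list => 'a
   (only finitely supported ones are ever built below); all operations are pointwise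
   or finite sums over splittings / permutations of a word. *)

type_synonym 'a tens = "nat list \<Rightarrow> 'a"

definition word_mono :: "nat list \<Rightarrow> 'a::field tens" where
  "word_mono w = (\<lambda>u. if u = w then 1 else 0)"

definition smul :: "'a::field \<Rightarrow> 'a tens \<Rightarrow> 'a tens" where
  "smul c f = (\<lambda>w. c * f w)"

(* multiplication in T(V): concatenation of words *)
definition tmul :: "'a::field tens \<Rightarrow> 'a tens \<Rightarrow> 'a tens" where
  "tmul f g = (\<lambda>w. \<Sum>k\<le>length w. f (take k w) * g (drop k w))"

(* chi(deg xs, deg ys) for words xs, ys *)
definition chi :: "(nat \<Rightarrow> nat \<Rightarrow> 'a::field) \<Rightarrow> nat list \<Rightarrow> nat list \<Rightarrow> 'a" where
  "chi q xs ys = (\<Prod>a\<leftarrow>xs. \<Prod>b\<leftarrow>ys. q a b)"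

(* braided bracket [x,y] = yx - p_{yx} xy, for x homogeneous of degree deg xs and
   y homogeneous of degree deg ys *)
definition lbr :: "(nat \<Rightarrow> nat \<Rightarrow> 'a::field) \<Rightarrow> nat list \<Rightarrow> nat list \<Rightarrow> 'a tens \<Rightarrow> 'a tens \<Rightarrow> 'a tens" where
  "lbr q xs ys x y = tmul y x - smul (chi q ys xs) (tmul x y)"

(* Quantum symmetrizer S_m = sum over sigma in S_m of T_sigma (Matsumoto lift of the
   diagonal braiding).  T_sigma sends the word u to the word with letter u!a at position
   sigma a, times the product of q (u!a) (u!b) over the inverted pairs a<b, sigma b < sigma a. *)
definition perm_word :: "(nat \<Rightarrow> nat) \<Rightarrow> nat list \<Rightarrow> nat list" where
  "perm_word \<sigma> w = map (\<lambda>a. w ! \<sigma> a) [0..<length w]"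

definition sym_coef :: "(nat \<Rightarrow> nat \<Rightarrow> 'a::field) \<Rightarrow> (nat \<Rightarrow> nat) \<Rightarrow> nat list \<Rightarrow> 'a" where
  "sym_coef q \<sigma> u = (\<Prod>(a,b)\<in>{(a,b). a < b \<and> b < length u \<and> \<sigma> b < \<sigma> a}. q (u!a) (u!b))"

definition qsym :: "(nat \<Rightarrow> nat \<Rightarrow> 'a::field) \<Rightarrow> 'a tens \<Rightarrow> 'a tens" where
  "qsym q f = (\<lambda>w. \<Sum>\<sigma>\<in>{\<sigma>. \<sigma> permutes {..<length w}}.
                 sym_coef q \<sigma> (perm_word \<sigma> w) * f (perm_word \<sigma> w))"

(* f = 0 in the Nichols algebra B(V) = T(V) / (sum_m ker S_m); since S preserves word
   length, this is equivalent to every homogeneous component lying in ker S_m. *)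
definition nichols_zero :: "(nat \<Rightarrow> nat \<Rightarrow> 'a::field) \<Rightarrow> 'a tens \<Rightarrow> bool" where
  "nichols_zero q f \<longleftrightarrow> qsym q f = (\<lambda>_. 0)"

inductive bracketing :: "(nat \<Rightarrow> nat \<Rightarrow> 'a::field) \<Rightarrow> nat list \<Rightarrow> 'a tens \<Rightarrow> bool"
  for q where
  leaf: "bracketing q [h] (word_mono [h])"
| node: "bracketing q xs x \<Longrightarrow> bracketing q ys y \<Longrightarrow> bracketing q (xs @ ys) (lbr q xs ys x y)"

definition lin_span :: "'a::field tens set \<Rightarrow> 'a tens set" where
  "lin_span S = {f. \<exists>(k::nat) c b. (\<forall>i<k. b i \<in> S) \<and> f = (\<Sum>i<k. smul (c i) (b i))}"

definition in_nichols_lie :: "(nat \<Rightarrow> nat \<Rightarrow> 'a::field) \<Rightarrow> nat \<Rightarrow> 'a tens \<Rightarrow> bool" where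
  "in_nichols_lie q n f \<longleftrightarrow>
     (\<exists>g \<in> lin_span {s. \<exists>h. h \<noteq> [] \<and> set h \<subseteq> {..<n} \<and> bracketing q h s}.
        nichols_zero q (f - g))"

definition dynkin_edges :: "(nat \<Rightarrow> nat \<Rightarrow> 'a::field) \<Rightarrow> nat set \<Rightarrow> (nat \<times> nat) set" where
  "dynkin_edges q S = {(i,j). i \<in> S \<and> j \<in> S \<and> i \<noteq> j \<and> q i j * q j i \<noteq> 1}"

definition connected_mono :: "(nat \<Rightarrow> nat \<Rightarrow> 'a::field) \<Rightarrow> nat list \<Rightarrow> bool" where
  "connected_mono q u \<longleftrightarrow> (\<forall>i\<in>set u. \<forall>j\<in>set u. (i,j) \<in> (dynkin_edges q (set u))\<^sup>*)"

end

theory Submission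
  imports Defs
begin

text \<open>
  The quantum symmetrizer is compatible with exchanging two adjacent blocks of letters u, v that
  commute pairwise (q a b * q b a = 1): it maps v u to chi(v, u) times the image of u v. Hence the
  two-sided ideal spanned by the relations v u - chi(v, u) u v lies in the kernel, which gives (i).
  For (ii), split the letters of a disconnected word into a connected component A and the rest B;
  letters of A commute with letters of B. In a bracketing, consider the node where A and B first
  meet: either one argument is already in the ideal, or the two arguments are homogeneous of
  degrees in A and in B, so that their bracket lies in the ideal by (i) and linearity. For (iii),
  project onto the multidegree of the word: the projection commutes with the symmetrizer, kills
  bracketings of other multidegrees and keeps those of the same one, which are disconnected and
  vanish by (ii).
\<close>

lemma smul_smul [simp]: "smul c (smul d f) = smul (c * d) f"
  by (simp add: smul_def fun_eq_iff)

lemma smul_one [simp]: "smul 1 f = f"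
  by (simp add: smul_def)

lemma smul_add: "smul c (f + g) = smul c f + smul c g"
  by (simp add: smul_def fun_eq_iff algebra_simps)

lemma smul_diff: "smul c (f - g) = smul c f - smul c g"
  by (simp add: smul_def fun_eq_iff algebra_simps)

lemma smul_zero [simp]: "smul c 0 = 0"
  by (simp add: smul_def fun_eq_iff)

lemma smul_minus_one: "smul (-1) f = - f"
  by (simp add: smul_def fun_eq_iff)

lemma tmul_word_mono: "tmul (word_mono u) (word_mono v) = (word_mono (u @ v) :: 'a::field tens)"
proof
  fix w :: "nat list"
  have "tmul (word_mono u) (word_mono v) w
      = (\<Sum>k\<le>length w. if k = length u \<and> w = u @ v then 1 else (0::'a))"
    unfolding tmul_def word_mono_def
    by (intro sum.cong) (auto simp: min_def)
  then show "tmul (word_mono u) (word_mono v) w = (word_mono (u @ v) w :: 'a)"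
    by (simp add: word_mono_def)
qed

lemma tmul_add_left: "tmul (f + g) h = tmul f h + tmul g h"
  by (simp add: tmul_def fun_eq_iff algebra_simps sum.distrib)

lemma tmul_add_right: "tmul h (f + g) = tmul h f + tmul h g"
  by (simp add: tmul_def fun_eq_iff algebra_simps sum.distrib)

lemma tmul_diff_left: "tmul (f - g) h = tmul f h - tmul g h"
  by (simp add: tmul_def fun_eq_iff algebra_simps sum_subtractf)

lemma tmul_diff_right: "tmul h (f - g) = tmul h f - tmul h g"
  by (simp add: tmul_def fun_eq_iff algebra_simps sum_subtractf)

lemma tmul_smul_left: "tmul (smul c f) h = smul c (tmul f h)"
  by (simp add: tmul_def smul_def fun_eq_iff algebra_simps sum_distrib_left)

lemma tmul_smul_right: "tmul h (smul c f) = smul c (tmul h f)"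
  by (simp add: tmul_def smul_def fun_eq_iff algebra_simps sum_distrib_left)

lemma tmul_zero_left [simp]: "tmul 0 h = 0"
  by (simp add: tmul_def fun_eq_iff)

lemma tmul_zero_right [simp]: "tmul h 0 = 0"
  by (simp add: tmul_def fun_eq_iff)

lemmas tmul_linear =
  tmul_add_left tmul_add_right tmul_diff_left tmul_diff_right tmul_smul_left tmul_smul_right

lemma chi_Cons: "chi q (b # v) u = (\<Prod>a\<leftarrow>u. q b a) * chi q v u"
  by (simp add: chi_def)

lemma chi_mset_eq:
  assumes "mset xs = mset xs'" "mset ys = mset ys'"
  shows "chi q xs ys = chi q xs' ys'"
proof -
  have prod_list_mset: "prod_list (map f l) = prod_list (map f l')" if "mset l = mset l'"
    for f :: "nat \<Rightarrow> 'b::comm_monoid_mult" and l l'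
    by (metis mset_map prod_mset_prod_list that)
  show ?thesis
    unfolding chi_def prod_list_mset[OF assms(1)] prod_list_mset[OF assms(2)] ..
qed

lemma lbr_add_left: "lbr q xs ys (f + g) y = lbr q xs ys f y + lbr q xs ys g y"
  by (simp add: lbr_def tmul_linear smul_add)

lemma lbr_add_right: "lbr q xs ys x (f + g) = lbr q xs ys x f + lbr q xs ys x g"
  by (simp add: lbr_def tmul_linear smul_add)

lemma lbr_smul_left: "lbr q xs ys (smul c f) y = smul c (lbr q xs ys f y)"
  by (simp add: lbr_def tmul_linear smul_diff mult.commute)

lemma lbr_smul_right: "lbr q xs ys x (smul c f) = smul c (lbr q xs ys x f)"
  by (simp add: lbr_def tmul_linear smul_diff mult.commute)

lemma lbr_zero_left [simp]: "lbr q xs ys 0 y = 0"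
  by (simp add: lbr_def)

lemma lbr_zero_right [simp]: "lbr q xs ys x 0 = 0"
  by (simp add: lbr_def)

lemma qsym_add: "qsym q (f + g) = qsym q f + qsym q g"
  by (simp add: qsym_def fun_eq_iff algebra_simps sum.distrib)

lemma qsym_diff: "qsym q (f - g) = qsym q f - qsym q g"
  by (simp add: qsym_def fun_eq_iff algebra_simps sum_subtractf)

lemma qsym_smul: "qsym q (smul c f) = smul c (qsym q f)"
  by (simp add: qsym_def smul_def fun_eq_iff algebra_simps sum_distrib_left)

lemma qsym_zero [simp]: "qsym q 0 = 0"
  by (simp add: qsym_def fun_eq_iff)

lemma nichols_zero_iff: "nichols_zero q f \<longleftrightarrow> qsym q f = 0"
  by (simp add: nichols_zero_def zero_fun_def)

lemma nichols_zero_lin_comb: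
  "(\<forall>i<(k::nat). nichols_zero q (b i)) \<Longrightarrow> nichols_zero q (\<Sum>i<k. smul (c i) (b i))"
  by (induction k) (simp_all add: nichols_zero_iff qsym_add qsym_smul)

subsection \<open>The symmetrizer on words with commuting letters\<close>

lemma length_perm_word [simp]: "length (perm_word \<sigma> w) = length w"
  by (simp add: perm_word_def)

lemma nth_perm_word [simp]: "i < length w \<Longrightarrow> perm_word \<sigma> w ! i = w ! \<sigma> i"
  by (simp add: perm_word_def)

lemma perm_word_comp:
  assumes "\<tau> permutes {..<length w}"
  shows "perm_word (\<sigma> \<circ> \<tau>) w = perm_word \<tau> (perm_word \<sigma> w)"
  using permutes_in_image[OF assms] by (intro nth_equalityI) auto

lemma mset_perm_word: "\<sigma> permutes {..<length w} \<Longrightarrow> mset (perm_word \<sigma> w) = mset w"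
  using mset_permute_list[of \<sigma> w] by (simp add: permute_list_def perm_word_def)

definition adj_swap :: "nat \<Rightarrow> nat \<Rightarrow> nat" where
  "adj_swap k = Transposition.transpose k (Suc k)"

lemma adj_swap_apply: "adj_swap k x = (if x = k then Suc k else if x = Suc k then k else x)"
  by (simp add: adj_swap_def Transposition.transpose_def)

lemma adj_swap_adj_swap [simp]: "adj_swap k (adj_swap k x) = x"
  by (simp add: adj_swap_def)

lemma adj_swap_permutes: "Suc k < m \<Longrightarrow> adj_swap k permutes {..<m}"
  unfolding adj_swap_def by (rule permutes_swap_id) auto

lemma perm_word_adj_swap: "perm_word (adj_swap (length p)) (p @ b # a # s) = p @ a # b # s"
  by (intro nth_equalityI) (auto simp: adj_swap_apply nth_append nth_Cons split: nat.splits)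

definition inversions :: "(nat \<Rightarrow> nat) \<Rightarrow> nat \<Rightarrow> (nat \<times> nat) set" where
  "inversions \<sigma> m = {(a, b). a < b \<and> b < m \<and> \<sigma> b < \<sigma> a}"

lemma finite_inversions [simp]: "finite (inversions \<sigma> m)"
  by (rule finite_subset[of _ "{..<m} \<times> {..<m}"]) (auto simp: inversions_def)

lemma sym_coef_inversions:
  "sym_coef q \<sigma> u = (\<Prod>(a, b)\<in>inversions \<sigma> (length u). q (u ! a) (u ! b))"
  by (simp add: sym_coef_def inversions_def)

lemma inversions_comp_adj_swap:
  assumes "Suc k < m"
  shows "inversions (\<sigma> \<circ> adj_swap k) m - {(k, Suc k)}
           = map_prod (adj_swap k) (adj_swap k) ` (inversions \<sigma> m - {(k, Suc k)})"
    (is "?L = ?s ` ?R")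
proof
  show "?s ` ?R \<subseteq> ?L"
    using assms by (auto simp: inversions_def adj_swap_apply split: if_splits)
  show "?L \<subseteq> ?s ` ?R"
  proof
    fix z assume "z \<in> ?L"
    then have "?s z \<in> ?R"
      using assms by (cases z) (auto simp: inversions_def adj_swap_apply split: if_splits)
    moreover have "z = ?s (?s z)"
      by (cases z) simp
    ultimately show "z \<in> ?s ` ?R"
      by blast
  qed
qed

text \<open>
  Precomposing with the adjacent transposition permutes the inversions other than (k, k + 1)
  and toggles whether (k, k + 1) is one; that pair contributes q b a on one side and q a b on
  the other, which agree up to the relation q a b * q b a = 1.
\<close>
lemma sym_coef_comp_adj_swap:
  fixes q :: "nat \<Rightarrow> nat \<Rightarrow> 'a::field"
  assumes \<sigma>: "\<sigma> permutes {..<length W}" and k: "Suc k < length W"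
    and "W ! k = b" "W ! Suc k = a" and ab: "q a b * q b a = 1"
  shows "sym_coef q \<sigma> W = q b a * sym_coef q (\<sigma> \<circ> adj_swap k) (perm_word (adj_swap k) W)"
proof -
  define m where "m = length W"
  define P where "P = (k, Suc k)"
  define f where "f = (\<lambda>(x, y). q (W ! x) (W ! y))"
  define f' where "f' = (\<lambda>(x, y). q (perm_word (adj_swap k) W ! x) (perm_word (adj_swap k) W ! y))"
  have lhs: "sym_coef q \<sigma> W = prod f (inversions \<sigma> m)"
    by (simp add: sym_coef_inversions f_def m_def)
  have rhs: "sym_coef q (\<sigma> \<circ> adj_swap k) (perm_word (adj_swap k) W)
      = prod f' (inversions (\<sigma> \<circ> adj_swap k) m)"
    by (simp add: sym_coef_inversions f'_def m_def)
  have "inj (adj_swap k)"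
    by (metis adj_swap_adj_swap injI)
  then have "inj (map_prod (adj_swap k) (adj_swap k))"
    using map_prod_inj_on by fastforce
  moreover have "adj_swap k x < m" if "x < m" for x
    using that k by (simp add: adj_swap_apply m_def)
  then have "f' (map_prod (adj_swap k) (adj_swap k) z) = f z" if "z \<in> inversions \<sigma> m" for z
    using that by (cases z) (simp add: f_def f'_def inversions_def m_def)
  ultimately have rest:
    "prod f' (inversions (\<sigma> \<circ> adj_swap k) m - {P}) = prod f (inversions \<sigma> m - {P})"
    using k by (simp add: inversions_comp_adj_swap m_def P_def prod.reindex inj_on_subset)
  have fP: "f P = q b a" and f'P: "f' P = q a b"
    using assms by (simp_all add: f_def f'_def P_def adj_swap_apply)
  have "\<sigma> k \<noteq> \<sigma> (Suc k)"
    using permutes_inj[OF \<sigma>] by (auto dest: injD)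
  then consider "\<sigma> (Suc k) < \<sigma> k" | "\<sigma> k < \<sigma> (Suc k)" by linarith
  then show ?thesis
  proof cases
    case 1
    then have "P \<in> inversions \<sigma> m" "P \<notin> inversions (\<sigma> \<circ> adj_swap k) m"
      using k by (auto simp: inversions_def P_def adj_swap_apply m_def)
    then show ?thesis
      using rest by (simp add: lhs rhs fP prod.remove[of _ P])
  next
    case 2
    then have "P \<notin> inversions \<sigma> m" "P \<in> inversions (\<sigma> \<circ> adj_swap k) m"
      using k by (auto simp: inversions_def P_def adj_swap_apply m_def)
    then have "q b a * sym_coef q (\<sigma> \<circ> adj_swap k) (perm_word (adj_swap k) W)
        = (q a b * q b a) * prod f (inversions \<sigma> m)"
      using rest by (simp add: rhs f'P prod.remove[of _ P] ac_simps)
    then show ?thesis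
      using ab by (simp add: lhs)
  qed
qed

lemma qsym_word_mono:
  "qsym q (word_mono W) w = (\<Sum>\<sigma> | \<sigma> permutes {..<length w} \<and> perm_word \<sigma> w = W. sym_coef q \<sigma> W)"
proof -
  have "qsym q (word_mono W) w
          = (\<Sum>\<sigma>\<in>{\<sigma>. \<sigma> permutes {..<length w}}. if perm_word \<sigma> w = W then sym_coef q \<sigma> W else 0)"
    unfolding qsym_def word_mono_def by (intro sum.cong) auto
  then show ?thesis
    by (simp add: sum.inter_filter[symmetric] finite_permutations)
qed

lemma qsym_word_swap_adjacent:
  fixes q :: "nat \<Rightarrow> nat \<Rightarrow> 'a::field"
  assumes ab: "q a b * q b a = 1"
  shows "qsym q (word_mono (p @ b # a # s)) = smul (q b a) (qsym q (word_mono (p @ a # b # s)))"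
proof
  fix w :: "nat list"
  define W where "W = p @ b # a # s"
  define W' where "W' = p @ a # b # s"
  define \<tau> where "\<tau> = adj_swap (length p)"
  define S where "S = (\<lambda>V. {\<sigma>. \<sigma> permutes {..<length w} \<and> perm_word \<sigma> w = V})"
  have qsym_S: "qsym q (word_mono V) w = (\<Sum>\<sigma>\<in>S V. sym_coef q \<sigma> V)" for V
    by (simp add: qsym_word_mono S_def)
  have "perm_word \<tau> W = W'" "perm_word \<tau> W' = W"
    by (simp_all add: W_def W'_def \<tau>_def perm_word_adj_swap)
  show "qsym q (word_mono W) w = smul (q b a) (qsym q (word_mono W')) w"
  proof (cases "length w = length W")
    case False
    then have "S W = {}" "S W' = {}"
      by (auto simp: S_def W_def W'_def dest: arg_cong[of _ _ length])
    then show ?thesis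
      by (simp add: qsym_S smul_def)
  next
    case True
    then have \<tau>: "\<tau> permutes {..<length w}"
      by (simp add: \<tau>_def adj_swap_permutes W_def)
    have "(\<Sum>\<sigma>\<in>S W. sym_coef q \<sigma> W) = (\<Sum>\<sigma>\<in>S W. q b a * sym_coef q (\<sigma> \<circ> \<tau>) W')"
    proof (rule sum.cong)
      fix \<sigma> assume "\<sigma> \<in> S W"
      then show "sym_coef q \<sigma> W = q b a * sym_coef q (\<sigma> \<circ> \<tau>) W'"
        using sym_coef_comp_adj_swap[of \<sigma> W "length p" b a q] True ab \<open>perm_word \<tau> W = W'\<close>
        by (auto simp: S_def W_def \<tau>_def nth_append)
    qed simp
    also have "\<dots> = q b a * (\<Sum>\<sigma>\<in>S W'. sym_coef q \<sigma> W')"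
      unfolding sum_distrib_left
      by (rule sum.reindex_bij_witness[where i = "\<lambda>\<sigma>. \<sigma> \<circ> \<tau>" and j = "\<lambda>\<sigma>. \<sigma> \<circ> \<tau>"])
         (use \<tau> \<open>perm_word \<tau> W = W'\<close> \<open>perm_word \<tau> W' = W\<close> in
           \<open>auto simp: S_def comp_assoc \<tau>_def permutes_compose perm_word_comp\<close>)
    finally show ?thesis
      by (simp add: qsym_S smul_def)
  qed
qed

lemma qsym_word_swap_letter_block:
  fixes q :: "nat \<Rightarrow> nat \<Rightarrow> 'a::field"
  assumes "\<forall>a\<in>set u. q a b * q b a = 1"
  shows "qsym q (word_mono (p @ b # u @ s)) = smul (\<Prod>a\<leftarrow>u. q b a) (qsym q (word_mono (p @ u @ b # s)))"
  using assms
proof (induction u arbitrary: p)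
  case (Cons a u)
  have "qsym q (word_mono (p @ b # a # u @ s)) = smul (q b a) (qsym q (word_mono (p @ a # b # u @ s)))"
    using Cons.prems by (intro qsym_word_swap_adjacent) simp
  also have "p @ a # b # u @ s = (p @ [a]) @ b # u @ s"
    by simp
  also have "qsym q (word_mono \<dots>) = smul (\<Prod>a\<leftarrow>u. q b a) (qsym q (word_mono (p @ a # u @ b # s)))"
    using Cons.IH[of "p @ [a]"] Cons.prems by simp
  finally show ?case by simp
qed simp

lemma qsym_word_swap_blocks:
  fixes q :: "nat \<Rightarrow> nat \<Rightarrow> 'a::field"
  assumes "\<forall>a\<in>set u. \<forall>b\<in>set v. q a b * q b a = 1"
  shows "qsym q (word_mono (p @ v @ u @ s)) = smul (chi q v u) (qsym q (word_mono (p @ u @ v @ s)))"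
  using assms
proof (induction v arbitrary: p)
  case Nil
  then show ?case by (simp add: chi_def)
next
  case (Cons b v)
  have "qsym q (word_mono (p @ (b # v) @ u @ s)) = smul (chi q v u) (qsym q (word_mono (p @ b # u @ v @ s)))"
    using Cons.IH[of "p @ [b]"] Cons.prems by simp
  also have "qsym q (word_mono (p @ b # u @ v @ s)) = smul (\<Prod>a\<leftarrow>u. q b a) (qsym q (word_mono (p @ u @ b # v @ s)))"
    using Cons.prems by (intro qsym_word_swap_letter_block) auto
  finally show ?case by (simp add: chi_Cons mult.commute)
qed

lemma nichols_zero_lbr_commuting_words:
  assumes "\<forall>a\<in>set u. \<forall>b\<in>set v. q a b * q b a = 1"
  shows "nichols_zero q (lbr q u v (word_mono u) (word_mono v))"
  using qsym_word_swap_blocks[OF assms, of "[]" "[]"]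
  by (simp add: nichols_zero_iff lbr_def tmul_word_mono qsym_diff qsym_smul)

subsection \<open>The ideal of commutation relations\<close>

text \<open>
  The induction method presents function-valued instances eta-expanded; with the pointwise rules
  active, simp would then unfold sums of tensors pointwise instead of using linearity lemmas.
\<close>
declare plus_fun_apply [simp del] zero_fun_apply [simp del] minus_apply [simp del]

inductive comm_ideal :: "(nat \<Rightarrow> nat \<Rightarrow> 'a::field) \<Rightarrow> 'a tens \<Rightarrow> bool" for q where
  relation: "\<forall>a\<in>set u. \<forall>b\<in>set v. q a b * q b a = 1 \<Longrightarrow>
    comm_ideal q (word_mono (p @ v @ u @ s) - smul (chi q v u) (word_mono (p @ u @ v @ s)))"
| zero: "comm_ideal q 0"
| add: "comm_ideal q f \<Longrightarrow> comm_ideal q g \<Longrightarrow> comm_ideal q (f + g)"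
| smul: "comm_ideal q f \<Longrightarrow> comm_ideal q (smul c f)"

lemma comm_ideal_nichols_zero: "comm_ideal q f \<Longrightarrow> nichols_zero q f"
  unfolding nichols_zero_iff
  by (induction rule: comm_ideal.induct) (simp_all add: qsym_diff qsym_add qsym_smul qsym_word_swap_blocks)

lemma comm_ideal_diff: "comm_ideal q f \<Longrightarrow> comm_ideal q g \<Longrightarrow> comm_ideal q (f - g)"
  using comm_ideal.add[of q f "smul (-1) g"] comm_ideal.smul[of q g "-1"]
  by (simp add: smul_minus_one)

lemma comm_ideal_tmul_word_left: "comm_ideal q f \<Longrightarrow> comm_ideal q (tmul (word_mono w) f)"
proof (induction rule: comm_ideal.induct)
  case (relation u v p s)
  then show ?case
    using comm_ideal.relation[of u v q "w @ p" s] by (simp add: tmul_linear tmul_word_mono)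
qed (simp_all add: tmul_linear comm_ideal.intros)

lemma comm_ideal_tmul_word_right: "comm_ideal q f \<Longrightarrow> comm_ideal q (tmul f (word_mono w))"
proof (induction rule: comm_ideal.induct)
  case (relation u v p s)
  then show ?case
    using comm_ideal.relation[of u v q p "s @ w"] by (simp add: tmul_linear tmul_word_mono)
qed (simp_all add: tmul_linear comm_ideal.intros)

inductive homog :: "nat list \<Rightarrow> 'a::field tens \<Rightarrow> bool" for h where
  word: "mset u = mset h \<Longrightarrow> homog h (word_mono u)"
| zero: "homog h 0"
| add: "homog h f \<Longrightarrow> homog h g \<Longrightarrow> homog h (f + g)"
| smul: "homog h f \<Longrightarrow> homog h (smul c f)"

lemma homog_diff: "homog h f \<Longrightarrow> homog h g \<Longrightarrow> homog h (f - g)"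
  using homog.add[of h f "smul (-1) g"] homog.smul[of h g "-1"]
  by (simp add: smul_minus_one)

lemma homog_mset_cong: "homog h f \<Longrightarrow> mset h = mset h' \<Longrightarrow> homog h' f"
  by (induction rule: homog.induct) (simp_all add: homog.intros)

lemma homog_tmul_word_left:
  "homog ys y \<Longrightarrow> mset u = mset xs \<Longrightarrow> homog (xs @ ys) (tmul (word_mono u) y)"
  by (induction rule: homog.induct) (simp_all add: tmul_linear tmul_word_mono homog.intros)

lemma homog_tmul: "homog xs x \<Longrightarrow> homog ys y \<Longrightarrow> homog (xs @ ys) (tmul x y)"
  by (induction rule: homog.induct) (simp_all add: tmul_linear homog_tmul_word_left homog.intros)

lemma homog_lbr:
  assumes "homog xs x" "homog ys y"
  shows "homog (xs @ ys) (lbr q xs ys x y)"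
proof -
  have "homog (xs @ ys) (tmul y x)"
    using homog_tmul[OF assms(2,1)] by (rule homog_mset_cong) simp
  then show ?thesis
    unfolding lbr_def using homog_tmul[OF assms] by (blast intro: homog_diff homog.smul)
qed

lemma bracketing_homog: "bracketing q h s \<Longrightarrow> homog h s"
  by (induction rule: bracketing.induct) (simp_all add: homog.word homog_lbr)

lemma comm_ideal_tmul_left: "homog h g \<Longrightarrow> comm_ideal q f \<Longrightarrow> comm_ideal q (tmul g f)"
  by (induction rule: homog.induct)
     (simp_all add: tmul_linear comm_ideal_tmul_word_left comm_ideal.intros)

lemma comm_ideal_tmul_right: "homog h g \<Longrightarrow> comm_ideal q f \<Longrightarrow> comm_ideal q (tmul f g)"
  by (induction rule: homog.induct)
     (simp_all add: tmul_linear comm_ideal_tmul_word_right comm_ideal.intros)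

lemma comm_ideal_lbr_left: "homog ys y \<Longrightarrow> comm_ideal q x \<Longrightarrow> comm_ideal q (lbr q xs ys x y)"
  unfolding lbr_def
  by (intro comm_ideal_diff comm_ideal.smul comm_ideal_tmul_left comm_ideal_tmul_right)

lemma comm_ideal_lbr_right: "homog xs x \<Longrightarrow> comm_ideal q y \<Longrightarrow> comm_ideal q (lbr q xs ys x y)"
  unfolding lbr_def
  by (intro comm_ideal_diff comm_ideal.smul comm_ideal_tmul_left comm_ideal_tmul_right)

lemma comm_ideal_lbr_words:
  assumes "mset u = mset xs" "mset v = mset ys" "\<forall>a\<in>set xs. \<forall>b\<in>set ys. q a b * q b a = 1"
  shows "comm_ideal q (lbr q xs ys (word_mono u) (word_mono v))"
proof -
  have "set u = set xs" "set v = set ys"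
    using assms(1,2) by (metis mset_eq_setD)+
  then have "comm_ideal q (word_mono (v @ u) - smul (chi q v u) (word_mono (u @ v)))"
    using comm_ideal.relation[of u v q "[]" "[]"] assms(3) by simp
  moreover have "chi q ys xs = chi q v u"
    using assms(1,2) by (intro chi_mset_eq) simp_all
  ultimately show ?thesis
    by (simp add: lbr_def tmul_word_mono)
qed

lemma comm_ideal_lbr_commuting:
  assumes "homog xs x" "homog ys y" "\<forall>a\<in>set xs. \<forall>b\<in>set ys. q a b * q b a = 1"
  shows "comm_ideal q (lbr q xs ys x y)"
proof -
  have words: "comm_ideal q (lbr q xs ys (word_mono u) y)" if "mset u = mset xs" for u
    using assms(2) that assms(3)
    by (induction rule: homog.induct)
       (simp_all add: comm_ideal_lbr_words lbr_add_right lbr_smul_right comm_ideal.intros)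
  from assms(1) show ?thesis
  proof (induction rule: homog.induct)
    case (word u)
    then show ?case by (rule words)
  next
    case zero
    then show ?case by (simp add: comm_ideal.zero)
  next
    case (add f g)
    then show ?case by (simp add: lbr_add_left comm_ideal.add)
  next
    case (smul f c)
    then show ?case by (simp add: lbr_smul_left comm_ideal.smul)
  qed
qed

subsection \<open>Bracketings of disconnected words\<close>

lemma bracketing_nonempty: "bracketing q h s \<Longrightarrow> h \<noteq> []"
  by (induction rule: bracketing.induct) simp_all

lemma bracketing_mixed_comm_ideal:
  assumes comm: "\<forall>a\<in>A. \<forall>b\<in>B. q a b * q b a = 1" and disj: "A \<inter> B = {}"
  shows "bracketing q h s \<Longrightarrow> set h \<subseteq> A \<union> B \<Longrightarrow> set h \<inter> A \<noteq> {} \<Longrightarrow> set h \<inter> B \<noteq> {}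
    \<Longrightarrow> comm_ideal q s"
proof (induction rule: bracketing.induct)
  case (leaf h)
  then show ?case using disj by auto
next
  case (node xs x ys y)
  have hom: "homog xs x" "homog ys y"
    using node.hyps by (simp_all add: bracketing_homog)
  have "xs \<noteq> []" "ys \<noteq> []"
    using node.hyps by (simp_all add: bracketing_nonempty)
  then consider "set xs \<inter> A \<noteq> {}" "set xs \<inter> B \<noteq> {}" | "set ys \<inter> A \<noteq> {}" "set ys \<inter> B \<noteq> {}"
    | "set xs \<subseteq> A" "set ys \<subseteq> B" | "set xs \<subseteq> B" "set ys \<subseteq> A"
    using node.prems by (cases xs; cases ys) auto
  then show ?case
  proof cases
    case 1
    then show ?thesis using node comm_ideal_lbr_left[OF hom(2)] by auto
  next
    case 2
    then show ?thesis using node comm_ideal_lbr_right[OF hom(1)] by auto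
  next
    case 3
    then show ?thesis using comm by (intro comm_ideal_lbr_commuting[OF hom]) blast
  next
    case 4
    have "q a b * q b a = 1" if "a \<in> set xs" "b \<in> set ys" for a b
      using 4 that comm by (metis mult.commute subsetD)
    then show ?thesis by (intro comm_ideal_lbr_commuting[OF hom]) blast
  qed
qed

lemma connected_mono_set_cong: "set u = set v \<Longrightarrow> connected_mono q u = connected_mono q v"
  by (simp add: connected_mono_def)

lemma disconnected_bracketing_comm_ideal:
  assumes "\<not> connected_mono q h" "bracketing q h s"
  shows "comm_ideal q s"
proof -
  define E where "E = dynkin_edges q (set h)"
  obtain i j where ij: "i \<in> set h" "j \<in> set h" "(i, j) \<notin> E\<^sup>*"
    using assms(1) unfolding connected_mono_def E_def by blast
  define A where "A = {k \<in> set h. (i, k) \<in> E\<^sup>*}"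
  define B where "B = set h - A"
  have "q a b * q b a = 1" if "a \<in> A" "b \<in> B" for a b
  proof (rule ccontr)
    assume "q a b * q b a \<noteq> 1"
    then have "(a, b) \<in> E"
      using that by (auto simp: E_def dynkin_edges_def A_def B_def)
    then have "b \<in> A"
      using that by (auto simp: A_def B_def intro: rtrancl_into_rtrancl)
    then show False
      using that by (simp add: B_def)
  qed
  moreover have "i \<in> A" "j \<in> B"
    using ij by (auto simp: A_def B_def)
  ultimately show ?thesis
    using assms(2) ij(1) by (intro bracketing_mixed_comm_ideal[of A B q]) (auto simp: A_def B_def)
qed

subsection \<open>Projection onto a multidegree\<close>

definition deg_proj :: "nat list \<Rightarrow> 'a::field tens \<Rightarrow> 'a tens" where
  "deg_proj h f = (\<lambda>w. if mset w = mset h then f w else 0)"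

lemma qsym_deg_proj: "qsym q (deg_proj h f) = deg_proj h (qsym q f)"
proof
  fix w
  have "mset (perm_word \<sigma> w) = mset w" if "\<sigma> permutes {..<length w}" for \<sigma>
    using that by (rule mset_perm_word)
  then show "qsym q (deg_proj h f) w = deg_proj h (qsym q f) w"
    unfolding qsym_def deg_proj_def by (auto intro!: sum.cong sum.neutral)
qed

lemma nichols_zero_deg_proj: "nichols_zero q f \<Longrightarrow> nichols_zero q (deg_proj h f)"
  by (simp add: nichols_zero_iff qsym_deg_proj) (simp add: deg_proj_def zero_fun_def)

lemma deg_proj_diff: "deg_proj h (f - g) = deg_proj h f - deg_proj h g"
  by (simp add: deg_proj_def fun_eq_iff minus_apply)

lemma deg_proj_add: "deg_proj h (f + g) = deg_proj h f + deg_proj h g"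
  by (simp add: deg_proj_def fun_eq_iff plus_fun_apply)

lemma deg_proj_smul: "deg_proj h (smul c f) = smul c (deg_proj h f)"
  by (simp add: deg_proj_def smul_def fun_eq_iff)

lemma deg_proj_zero [simp]: "deg_proj h 0 = 0"
  by (simp add: deg_proj_def fun_eq_iff zero_fun_apply)

lemma deg_proj_lin_comb:
  "deg_proj h (\<Sum>i<(k::nat). smul (c i) (b i)) = (\<Sum>i<k. smul (c i) (deg_proj h (b i)))"
  by (induction k) (simp_all add: deg_proj_add deg_proj_smul)

lemma deg_proj_homog: "homog h' f \<Longrightarrow> deg_proj h f = (if mset h' = mset h then f else 0)"
proof (induction rule: homog.induct)
  case (word u)
  then show ?case
    by (auto simp: deg_proj_def word_mono_def fun_eq_iff zero_fun_def)
qed (simp_all add: deg_proj_add deg_proj_smul)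

lemma disconnected_word_not_in_nichols_lie:
  assumes "\<not> nichols_zero q (word_mono h)" "\<not> connected_mono q h"
  shows "\<not> in_nichols_lie q n (word_mono h)"
proof
  assume "in_nichols_lie q n (word_mono h)"
  then obtain k :: nat and c b where b: "\<forall>i<k. \<exists>h'. bracketing q h' (b i)"
    and nz: "nichols_zero q (word_mono h - (\<Sum>i<k. smul (c i) (b i)))"
    unfolding in_nichols_lie_def lin_span_def by blast
  have "nichols_zero q (deg_proj h (b i))" if "i < k" for i
  proof -
    obtain h' where h': "bracketing q h' (b i)"
      using b \<open>i < k\<close> by blast
    show ?thesis
    proof (cases "mset h' = mset h")
      case True
      then have "\<not> connected_mono q h'"
        using assms(2) connected_mono_set_cong mset_eq_setD by metis
      then have "nichols_zero q (b i)"
        using h' by (intro comm_ideal_nichols_zero disconnected_bracketing_comm_ideal)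
      then show ?thesis
        using True by (simp add: deg_proj_homog[OF bracketing_homog[OF h']])
    qed (simp add: deg_proj_homog[OF bracketing_homog[OF h']] nichols_zero_iff)
  qed
  then have "nichols_zero q (deg_proj h (\<Sum>i<k. smul (c i) (b i)))"
    by (simp add: deg_proj_lin_comb nichols_zero_lin_comb)
  moreover have "nichols_zero q (word_mono h - deg_proj h (\<Sum>i<k. smul (c i) (b i)))"
    using nichols_zero_deg_proj[OF nz, of h]
    by (simp add: deg_proj_diff deg_proj_homog[OF homog.word[of h h]])
  ultimately have "nichols_zero q (word_mono h)"
    by (simp add: nichols_zero_iff qsym_diff)
  with assms(1) show False ..
qed

theorem lemma2p2:
  fixes q :: "nat \<Rightarrow> nat \<Rightarrow> 'a::{field_char_0, alg_closed_field}" and n :: nat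
  assumes "\<forall>i<n. \<forall>j<n. q i j \<noteq> 0"
  shows "(\<forall>u v. u \<noteq> [] \<and> v \<noteq> [] \<and> set u \<subseteq> {..<n} \<and> set v \<subseteq> {..<n}
            \<and> (\<forall>i\<in>set u. \<forall>j\<in>set v. q i j * q j i = 1)
            \<longrightarrow> nichols_zero q (lbr q u v (word_mono u) (word_mono v)))
       \<and> (\<forall>h s. h \<noteq> [] \<and> set h \<subseteq> {..<n} \<and> \<not> connected_mono q h \<and> bracketing q h s
            \<longrightarrow> nichols_zero q s)
       \<and> (\<forall>h. h \<noteq> [] \<and> set h \<subseteq> {..<n} \<and> \<not> nichols_zero q (word_mono h)
            \<and> \<not> connected_mono q h
            \<longrightarrow> \<not> in_nichols_lie q n (word_mono h))"
proof (intro conjI allI impI)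
  fix u v :: "nat list"
  assume "u \<noteq> [] \<and> v \<noteq> [] \<and> set u \<subseteq> {..<n} \<and> set v \<subseteq> {..<n}
            \<and> (\<forall>i\<in>set u. \<forall>j\<in>set v. q i j * q j i = 1)"
  then show "nichols_zero q (lbr q u v (word_mono u) (word_mono v))"
    by (intro nichols_zero_lbr_commuting_words) blast
next
  fix h s
  assume "h \<noteq> [] \<and> set h \<subseteq> {..<n} \<and> \<not> connected_mono q h \<and> bracketing q h s"
  then show "nichols_zero q s"
    by (blast intro: comm_ideal_nichols_zero disconnected_bracketing_comm_ideal)
next
  fix h
  assume "h \<noteq> [] \<and> set h \<subseteq> {..<n} \<and> \<not> nichols_zero q (word_mono h) \<and> \<not> connected_mono q h"
  then show "\<not> in_nichols_lie q n (word_mono h)"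
    by (intro disconnected_word_not_in_nichols_lie) simp_all
qed

end
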